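(* Let $F\in\mathcal E(\lambda,\Lambda)$ be concave and let $v$ be a bounded viscosity solution of $F(D^2v)=0$ in $B_1^+$ and in $B_1^-$, $v^+_{x_n}-v^-_{x_n}=0$ on $T$. Then $v\in C^{2,\bar{\bar\alpha}}(\overline{B_{1/2}})$ and $\|v\|_{C^{2,\bar{\bar\alpha}}(\overline{B_{1/2}})}\le C\|v\|_{L^\infty(B_1)}$, with $C>0$ depending only on $n,\lambda,\Lambda$.
   Context: $\mathcal E(\lambda,\Lambda)$: $F:\mathcal S^n\to\mathbb R$ with $F(0)=0$ and $\lambda\|N\|\le F(M+N)-F(M)\le\Lambda\|N\|$ for $N\ge0$. $\bar{\bar\alpha}\in(0,1)$, depending only on $n,\lambda,\Lambda$, is an exponent of universal interior $C^{2,\bar{\bar\alpha}}$ regularity (with estimate $\|w\|_{C^{2,\bar{\bar\alpha}}(\overline{B_{1/2}})}\le C\|w\|_{L^\infty(B_1)}$) for viscosity solutions of $F(D^2w)=0$ in $B_1$ with $F\in\mathcal E(\lambda,\Lambda)$ concave. $B_1^\pm=B_1\cap\{\pm x_n>0\}$, $T=B_1\cap\{x_n=0\}$. Viscosity solution of the flat problem: continuous $v$ which is a sub- and supersolution, where subsolution means for $\varphi$ touching $v$ from above at $x_0$: if $x_0\in B_1^\pm$ and $\varphi$ is $C^2$ near $x_0$, $F(D^2\varphi(x_0))\ge0$; if $x_0\in T$ and $\varphi$ is continuous with restrictions $\varphi^\pm$ to $\overline{B_\delta(x_0)\cap\{\pm x_n>0\}}$ of class $C^2$, $\varphi^+_{x_n}(x_0)-\varphi^-_{x_n}(x_0)\ge0$;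 supersolution: touching from below, reversed inequalities. *)

theory Defs
  imports "HOL-Analysis.Analysis"
begin

type_synonym 'n mat = "real ^ 'n ^ 'n"

definition symm_mats :: "'n::finite mat set" where
  "symm_mats = {M. transpose M = M}"

definition psd :: "'n::finite mat \<Rightarrow> bool" where
  "psd N \<longleftrightarrow> (\<forall>x. 0 \<le> x \<bullet> (N *v x))"

definition mnorm :: "'n::finite mat \<Rightarrow> real" where
  "mnorm N = onorm (\<lambda>x. N *v x)"

definition ellipticClass :: "real \<Rightarrow> real \<Rightarrow> ('n::finite mat \<Rightarrow> real) set" where
  "ellipticClass lam Lam = {F. F 0 = 0 \<and>
     (\<forall>M\<in>symm_mats. \<forall>N\<in>symm_mats. psd N \<longrightarrow>
        lam * mnorm N \<le> F (M + N) - F M \<and> F (M + N) - F M \<le> Lam * mnorm N)}"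

definition C2_on :: "(real^'n::finite) set \<Rightarrow> (real^'n \<Rightarrow> real) \<Rightarrow> (real^'n \<Rightarrow> real^'n)
    \<Rightarrow> (real^'n \<Rightarrow> 'n mat) \<Rightarrow> bool" where
  "C2_on S v Dv D2v \<longleftrightarrow> open S \<and>
     (\<forall>x\<in>S. (v has_derivative (\<lambda>h. Dv x \<bullet> h)) (at x) \<and>
             (Dv has_derivative (\<lambda>h. D2v x *v h)) (at x)) \<and>
     continuous_on S D2v"

definition holder_quots :: "(real^'n::finite) set \<Rightarrow> real \<Rightarrow> (real^'n \<Rightarrow> 'n mat) \<Rightarrow> real set" where
  "holder_quots S a D2v =
     {norm (D2v x - D2v y) / (dist x y powr a) | x y. x \<in> S \<and> y \<in> S \<and> x \<noteq> y}"

text \<open>Membership in C^{2,a}(closure S) (S open), derivatives taken on S, and the norm.\<close>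
definition in_C2a :: "(real^'n::finite) set \<Rightarrow> real \<Rightarrow> (real^'n \<Rightarrow> real) \<Rightarrow> (real^'n \<Rightarrow> real^'n)
    \<Rightarrow> (real^'n \<Rightarrow> 'n mat) \<Rightarrow> bool" where
  "in_C2a S a v Dv D2v \<longleftrightarrow> C2_on S v Dv D2v \<and>
     bounded (v ` S) \<and> bounded (Dv ` S) \<and> bounded (D2v ` S) \<and>
     bdd_above (holder_quots S a D2v)"

definition C2a_norm :: "(real^'n::finite) set \<Rightarrow> real \<Rightarrow> (real^'n \<Rightarrow> real) \<Rightarrow> (real^'n \<Rightarrow> real^'n)
    \<Rightarrow> (real^'n \<Rightarrow> 'n mat) \<Rightarrow> real" where
  "C2a_norm S a v Dv D2v =
     (SUP x\<in>S. \<bar>v x\<bar>) + (SUP x\<in>S. norm (Dv x)) + (SUP x\<in>S. norm (D2v x))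
     + Sup (holder_quots S a D2v)"

definition sup_norm :: "(real^'n::finite) set \<Rightarrow> (real^'n \<Rightarrow> real) \<Rightarrow> real" where
  "sup_norm S v = (SUP x\<in>S. \<bar>v x\<bar>)"

definition touches_above :: "(real^'n::finite) set \<Rightarrow> (real^'n \<Rightarrow> real) \<Rightarrow> (real^'n \<Rightarrow> real) \<Rightarrow> real^'n \<Rightarrow> bool" where
  "touches_above Om phi v x0 \<longleftrightarrow> phi x0 = v x0 \<and>
     (\<exists>r>0. \<forall>x\<in>ball x0 r \<inter> Om. v x \<le> phi x)"

definition touches_below :: "(real^'n::finite) set \<Rightarrow> (real^'n \<Rightarrow> real) \<Rightarrow> (real^'n \<Rightarrow> real) \<Rightarrow> real^'n \<Rightarrow> bool" where
  "touches_below Om phi v x0 \<longleftrightarrow> phi x0 = v x0 \<and>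
     (\<exists>r>0. \<forall>x\<in>ball x0 r \<inter> Om. phi x \<le> v x)"

definition visc_sub_at :: "('n::finite mat \<Rightarrow> real) \<Rightarrow> (real^'n) set \<Rightarrow> (real^'n \<Rightarrow> real) \<Rightarrow> real^'n \<Rightarrow> bool" where
  "visc_sub_at F Om v x0 \<longleftrightarrow> (\<forall>phi Dphi D2phi U. x0 \<in> U \<and> C2_on U phi Dphi D2phi \<and>
      touches_above Om phi v x0 \<longrightarrow> F (D2phi x0) \<ge> 0)"

definition visc_super_at :: "('n::finite mat \<Rightarrow> real) \<Rightarrow> (real^'n) set \<Rightarrow> (real^'n \<Rightarrow> real) \<Rightarrow> real^'n \<Rightarrow> bool" where
  "visc_super_at F Om v x0 \<longleftrightarrow> (\<forall>phi Dphi D2phi U. x0 \<in> U \<and> C2_on U phi Dphi D2phi \<and>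
      touches_below Om phi v x0 \<longrightarrow> F (D2phi x0) \<le> 0)"

definition visc_solution :: "('n::finite mat \<Rightarrow> real) \<Rightarrow> (real^'n) set \<Rightarrow> (real^'n \<Rightarrow> real) \<Rightarrow> bool" where
  "visc_solution F Om w \<longleftrightarrow> continuous_on Om w \<and>
     (\<forall>x0\<in>Om. visc_sub_at F Om w x0 \<and> visc_super_at F Om w x0)"

text \<open>Half balls and flat interface, with the distinguished last coordinate k.\<close>
definition half_ball_pos :: "'n::finite \<Rightarrow> (real^'n) set" where
  "half_ball_pos k = {x \<in> ball 0 1. x $ k > 0}"
definition half_ball_neg :: "'n::finite \<Rightarrow> (real^'n) set" where
  "half_ball_neg k = {x \<in> ball 0 1. x $ k < 0}"
definition flat_T :: "'n::finite \<Rightarrow> (real^'n) set" where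
  "flat_T k = {x \<in> ball 0 1. x $ k = 0}"

text \<open>Piecewise C^2 test function at x0 in T: phi is continuous on a ball B_delta(x0) and its
  restrictions to the closed half balls are C^2 (i.e. agree there with C^2 functions phip, phim
  defined on a neighbourhood); the normal derivatives are the k-th gradient components.\<close>
definition pw_C2_test :: "'n::finite \<Rightarrow> real^'n \<Rightarrow> (real^'n \<Rightarrow> real) \<Rightarrow> real \<Rightarrow> real \<Rightarrow> bool" where
  "pw_C2_test k x0 phi dp dm \<longleftrightarrow> (\<exists>\<delta>>0. continuous_on (ball x0 \<delta>) phi \<and>
     (\<exists>phip Dp D2p phim Dm D2m.
        C2_on (ball x0 \<delta>) phip Dp D2p \<and> C2_on (ball x0 \<delta>) phim Dm D2m \<and>
        (\<forall>x\<in>cball x0 \<delta>. x $ k \<ge> 0 \<longrightarrow> phi x = phip x) \<and>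
        (\<forall>x\<in>cball x0 \<delta>. x $ k \<le> 0 \<longrightarrow> phi x = phim x) \<and>
        dp = Dp x0 $ k \<and> dm = Dm x0 $ k))"

text \<open>Viscosity solution of the flat transmission problem
  F(D^2 v) = 0 in B_1^+ and B_1^-, v^+_{x_n} - v^-_{x_n} = 0 on T.\<close>
definition flat_visc_solution :: "('n::finite mat \<Rightarrow> real) \<Rightarrow> 'n \<Rightarrow> (real^'n \<Rightarrow> real) \<Rightarrow> bool" where
  "flat_visc_solution F k v \<longleftrightarrow> continuous_on (ball 0 1) v \<and>
     (\<forall>x0 \<in> half_ball_pos k \<union> half_ball_neg k.
        visc_sub_at F (ball 0 1) v x0 \<and> visc_super_at F (ball 0 1) v x0) \<and>
     (\<forall>x0 \<in> flat_T k. \<forall>phi dp dm. pw_C2_test k x0 phi dp dm \<longrightarrow>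
        (touches_above (ball 0 1) phi v x0 \<longrightarrow> dp - dm \<ge> 0) \<and>
        (touches_below (ball 0 1) phi v x0 \<longrightarrow> dp - dm \<le> 0))"

definition univ_C2a_exponent :: "'n::finite itself \<Rightarrow> real \<Rightarrow> real \<Rightarrow> real \<Rightarrow> bool" where
  "univ_C2a_exponent TYPE('n) lam Lam a \<longleftrightarrow> 0 < a \<and> a < 1 \<and>
     (\<exists>C>0. \<forall>(F::'n mat \<Rightarrow> real) w. F \<in> ellipticClass lam Lam \<and> concave_on symm_mats F \<and>
        visc_solution F (ball 0 1) w \<and> bounded (w ` ball 0 1) \<longrightarrow>
        (\<exists>Dw D2w. in_C2a (ball 0 (1/2)) a w Dw D2w \<and>
           C2a_norm (ball 0 (1/2)) a w Dw D2w \<le> C * sup_norm (ball 0 1) w))"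

end

theory Submission
  imports Defs
begin

text \<open>A flat solution with zero jump is a viscosity solution of F(D^2 v) = 0 in all of B_1, so
  the universal interior C^{2,alpha} estimate applies to it directly. Suppose a C^2 function phi
  touches v from above at a point x0 of T with F(D^2 phi(x0)) < 0. Replace phi by the kinked function
  phi + eta |x - x0|^2 - t |x_n| and lower it until it touches v at some z near x0. Off T the kink
  is smooth and its Hessian differs from D^2 phi by only 2 eta, so F is still negative there,
  contradicting the equation in B_1^+ or B_1^-; on T the kink has normal jump -2t < 0, contradicting
  the transmission condition. Supersolutions follow by passing to the dual operator -F(-M) and -v.
  Ellipticity is assumed only on symmetric matrices, hence the need for the symmetry of Hessians.\<close>

section \<open>Symmetry of Hessians\<close>

lemma second_difference_le:
  fixes f :: "real^'n::finite \<Rightarrow> real"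
  assumes df: "\<And>y. y \<in> ball x r \<Longrightarrow> (f has_derivative (\<lambda>h. Df y \<bullet> h)) (at y)"
    and dd: "\<And>y. norm (y - x) < \<delta> \<Longrightarrow> norm (Df y - Df x - A *v (y - x)) \<le> e * norm (y - x)"
    and e: "0 \<le> e" and hk: "norm h + norm k < \<delta>" "norm h + norm k < r"
  shows "\<bar>f (x + h + k) - f (x + h) - f (x + k) + f x - (A *v k) \<bullet> h\<bar>
           \<le> 2 * e * (norm h + norm k) * norm h"
proof -
  define c where "c = (A *v k) \<bullet> h"
  define B where "B = 2 * e * (norm h + norm k) * norm h"
  define g where "g u = f (x + u *\<^sub>R h + k) - f (x + u *\<^sub>R h) - u * c" for u
  define g' where "g' u = (Df (x + u *\<^sub>R h + k) - Df (x + u *\<^sub>R h)) \<bullet> h - c" for u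
  define E where "E y = Df y - Df x - A *v (y - x)" for y
  have near: "norm ((x + u *\<^sub>R h + k) - x) \<le> norm h + norm k"
    "norm ((x + u *\<^sub>R h) - x) \<le> norm h + norm k" if "u \<in> {0..1}" for u
  proof -
    have "norm (u *\<^sub>R h) \<le> norm h" using that by (simp add: mult_left_le_one_le)
    then show "norm ((x + u *\<^sub>R h + k) - x) \<le> norm h + norm k"
      "norm ((x + u *\<^sub>R h) - x) \<le> norm h + norm k"
      using norm_triangle_ineq[of "u *\<^sub>R h" k] by (auto simp: add.assoc) (smt (verit) norm_ge_zero)
  qed
  have in_ball: "x + u *\<^sub>R h + k \<in> ball x r" "x + u *\<^sub>R h \<in> ball x r" if "u \<in> {0..1}" for u
    using near[OF that] hk by (metis dist_commute dist_norm mem_ball order_le_less_trans)+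
  have "(g has_derivative (\<lambda>d. d * g' u)) (at u within {0..1})" if u: "u \<in> {0..1}" for u
  proof -
    have "((\<lambda>u. f (x + u *\<^sub>R h + k)) has_derivative (\<lambda>d. Df (x + u *\<^sub>R h + k) \<bullet> (d *\<^sub>R h)))
            (at u within {0..1})"
      by (rule has_derivative_compose[where f="\<lambda>u. x + u *\<^sub>R h + k", OF _ df[OF in_ball(1)[OF u]]])
         (auto intro!: derivative_eq_intros)
    moreover have "((\<lambda>u. f (x + u *\<^sub>R h)) has_derivative (\<lambda>d. Df (x + u *\<^sub>R h) \<bullet> (d *\<^sub>R h)))
            (at u within {0..1})"
      by (rule has_derivative_compose[where f="\<lambda>u. x + u *\<^sub>R h", OF _ df[OF in_ball(2)[OF u]]])
         (auto intro!: derivative_eq_intros)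
    ultimately have "(g has_derivative (\<lambda>d. Df (x + u *\<^sub>R h + k) \<bullet> (d *\<^sub>R h)
        - Df (x + u *\<^sub>R h) \<bullet> (d *\<^sub>R h) - d * c)) (at u within {0..1})"
      unfolding g_def by (intro derivative_intros)
    then show ?thesis
      by (rule has_derivative_eq_rhs) (auto simp: g'_def algebra_simps fun_eq_iff)
  qed
  moreover have "onorm (\<lambda>d. d * g' u) \<le> B" if u: "u \<in> {0..1}" for u
  proof -
    have "A *v ((x + u *\<^sub>R h + k) - x) - A *v ((x + u *\<^sub>R h) - x) = A *v k"
      by (simp flip: matrix_vector_mult_diff_distrib)
    then have "g' u = (E (x + u *\<^sub>R h + k) - E (x + u *\<^sub>R h)) \<bullet> h"
      by (simp add: g'_def E_def c_def algebra_simps)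
    then have "\<bar>g' u\<bar> \<le> norm (E (x + u *\<^sub>R h + k) - E (x + u *\<^sub>R h)) * norm h"
      by (simp add: Cauchy_Schwarz_ineq2)
    also have "\<dots> \<le> (norm (E (x + u *\<^sub>R h + k)) + norm (E (x + u *\<^sub>R h))) * norm h"
      by (intro mult_right_mono norm_triangle_ineq4) auto
    also have "\<dots> \<le> (e * (norm h + norm k) + e * (norm h + norm k)) * norm h"
    proof -
      have "norm (E y) \<le> e * (norm h + norm k)" if "norm (y - x) \<le> norm h + norm k" for y
      proof -
        have "norm (E y) \<le> e * norm (y - x)" using dd[of y] that hk unfolding E_def by linarith
        also have "\<dots> \<le> e * (norm h + norm k)" using that e by (rule mult_left_mono)
        finally show ?thesis .
      qed
      then show ?thesis using near[OF u] by (intro mult_right_mono add_mono) auto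
    qed
    finally have "\<bar>g' u\<bar> \<le> B" by (simp add: B_def algebra_simps)
    then show ?thesis
      by (intro onorm_le) (simp add: abs_mult mult.commute[of B] mult_left_mono)
  qed
  ultimately have "norm (g 1 - g 0) \<le> B * norm (1 - 0::real)"
    by (intro differentiable_bound[of "{0..1}" g "\<lambda>u d. d * g' u"]) auto
  then show ?thesis
    by (simp add: g_def c_def B_def)
qed

lemma hessian_asymmetry_le:
  fixes f :: "real^'n::finite \<Rightarrow> real"
  assumes r: "0 < r"
    and df: "\<And>y. y \<in> ball x r \<Longrightarrow> (f has_derivative (\<lambda>h. Df y \<bullet> h)) (at y)"
    and d2: "(Df has_derivative (\<lambda>h. A *v h)) (at x)"
    and e: "0 < e"
  shows "\<bar>(A *v k) \<bullet> h - (A *v h) \<bullet> k\<bar> \<le> 2 * e * (norm h + norm k)\<^sup>2"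
proof -
  obtain \<delta> where \<delta>: "0 < \<delta>"
    and dd: "\<And>y. norm (y - x) < \<delta> \<Longrightarrow> norm (Df y - Df x - A *v (y - x)) \<le> e * norm (y - x)"
    using d2 e unfolding has_derivative_at_alt by blast
  define P where "P = norm h + norm k + 1"
  have P: "0 < P" by (simp add: P_def add_nonneg_pos)
  define s where "s = min \<delta> r / (2 * P)"
  have s: "0 < s" using \<delta> r P by (simp add: s_def)
  have "s * (norm h + norm k) \<le> s * P" using s by (simp add: P_def)
  also have "\<dots> < min \<delta> r" using P \<delta> r by (auto simp: s_def min_def)
  finally have small: "norm (s *\<^sub>R h) + norm (s *\<^sub>R k) < \<delta>" "norm (s *\<^sub>R h) + norm (s *\<^sub>R k) < r"
    "norm (s *\<^sub>R k) + norm (s *\<^sub>R h) < \<delta>" "norm (s *\<^sub>R k) + norm (s *\<^sub>R h) < r"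
    using s by (simp_all add: distrib_left add.commute)
  have "\<bar>f (x + s *\<^sub>R h + s *\<^sub>R k) - f (x + s *\<^sub>R h) - f (x + s *\<^sub>R k) + f x - s\<^sup>2 * ((A *v k) \<bullet> h)\<bar>
      \<le> 2 * e * s\<^sup>2 * (norm h + norm k) * norm h"
    using second_difference_le[OF df dd less_imp_le[OF e] small(1,2)] s
    by (simp add: power2_eq_square algebra_simps)
  moreover have "\<bar>f (x + s *\<^sub>R h + s *\<^sub>R k) - f (x + s *\<^sub>R k) - f (x + s *\<^sub>R h) + f x - s\<^sup>2 * ((A *v h) \<bullet> k)\<bar>
      \<le> 2 * e * s\<^sup>2 * (norm h + norm k) * norm k"
    using second_difference_le[OF df dd less_imp_le[OF e] small(3,4)] s
    by (simp add: power2_eq_square algebra_simps)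
  ultimately have "\<bar>s\<^sup>2 * ((A *v k) \<bullet> h) - s\<^sup>2 * ((A *v h) \<bullet> k)\<bar>
      \<le> 2 * e * s\<^sup>2 * (norm h + norm k) * norm h + 2 * e * s\<^sup>2 * (norm h + norm k) * norm k"
    unfolding abs_le_iff by linarith
  also have "\<dots> = s\<^sup>2 * (2 * e * (norm h + norm k)\<^sup>2)"
    by (simp add: power2_eq_square algebra_simps)
  finally have "s\<^sup>2 * \<bar>(A *v k) \<bullet> h - (A *v h) \<bullet> k\<bar> \<le> s\<^sup>2 * (2 * e * (norm h + norm k)\<^sup>2)"
    by (simp add: abs_mult flip: right_diff_distrib)
  then show ?thesis
    using s by (simp add: mult_le_cancel_left_pos)
qed

lemma hessian_symmetric:
  fixes f :: "real^'n::finite \<Rightarrow> real"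
  assumes r: "0 < r"
    and df: "\<And>y. y \<in> ball x r \<Longrightarrow> (f has_derivative (\<lambda>h. Df y \<bullet> h)) (at y)"
    and d2: "(Df has_derivative (\<lambda>h. A *v h)) (at x)"
  shows "transpose A = A"
proof -
  have "(A *v k) \<bullet> h = (A *v h) \<bullet> k" for h k
  proof -
    define C where "C = 2 * (norm h + norm k)\<^sup>2 + 1"
    have C: "0 < C" by (simp add: C_def add_nonneg_pos)
    have "\<bar>(A *v k) \<bullet> h - (A *v h) \<bullet> k\<bar> \<le> 0 + e" if e: "0 < e" for e
    proof -
      have "\<bar>(A *v k) \<bullet> h - (A *v h) \<bullet> k\<bar> \<le> 2 * (e / C) * (norm h + norm k)\<^sup>2"
        by (rule hessian_asymmetry_le[OF r df d2 divide_pos_pos[OF e C]])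
      also have "\<dots> = e / C * (2 * (norm h + norm k)\<^sup>2)" by simp
      also have "\<dots> \<le> e / C * C"
        using e C by (intro mult_left_mono) (auto simp: C_def)
      finally show ?thesis using C by simp
    qed
    then have "\<bar>(A *v k) \<bullet> h - (A *v h) \<bullet> k\<bar> \<le> 0"
      by (rule field_le_epsilon)
    then show ?thesis by simp
  qed
  from this[of "axis i 1" "axis j 1" for i j] show ?thesis
    by (simp add: vec_eq_iff transpose_def cart_eq_inner_axis[symmetric] matrix_vector_mult_basis column_def)
qed

lemma C2_on_continuous: "C2_on U f Df D2f \<Longrightarrow> continuous_on U f"
  unfolding C2_on_def by (meson continuous_at_imp_continuous_on has_derivative_continuous)

lemma C2_on_subset: "C2_on S f Df D2f \<Longrightarrow> open T \<Longrightarrow> T \<subseteq> S \<Longrightarrow> C2_on T f Df D2f"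
  unfolding C2_on_def by (auto intro: continuous_on_subset)

lemma C2_on_hessian_symmetric:
  assumes "C2_on S f Df D2f" "x \<in> S"
  shows "D2f x \<in> symm_mats"
proof -
  obtain r where "0 < r" "ball x r \<subseteq> S"
    using assms openE unfolding C2_on_def by blast
  with assms show ?thesis
    unfolding symm_mats_def C2_on_def by (blast intro: hessian_symmetric)
qed

lemma matrix_vector_mult_uminus_left: "(- A) *v x = - (A *v (x::real^'n::finite))"
  by (simp add: vec_eq_iff matrix_vector_mult_def sum_negf)

lemma matrix_vector_mult_mat: "mat c *v (x::real^'n::finite) = c *\<^sub>R x"
proof -
  have "mat c = c *\<^sub>R (mat 1 :: real^'n^'n)" by (simp add: vec_eq_iff mat_def)
  then show ?thesis by (simp flip: scaleR_matrix_vector_assoc)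
qed

lemma C2_on_uminus:
  assumes "C2_on S f Df D2f"
  shows "C2_on S (\<lambda>x. - f x) (\<lambda>x. - Df x) (\<lambda>x. - D2f x)"
  using assms unfolding C2_on_def
  by (auto intro!: continuous_intros has_derivative_eq_rhs[OF has_derivative_minus]
      simp: matrix_vector_mult_uminus_left)

lemma C2_on_add_quadratic:
  fixes k :: "'n::finite"
  assumes "C2_on U f Df D2f"
  shows "C2_on U (\<lambda>x. f x + \<eta> * ((x - x0) \<bullet> (x - x0)) + c * x $ k + m)
                 (\<lambda>x. Df x + (2 * \<eta>) *\<^sub>R (x - x0) + c *\<^sub>R axis k 1)
                 (\<lambda>x. D2f x + mat (2 * \<eta>))"
  unfolding C2_on_def
proof (intro conjI ballI)
  show "open U" "continuous_on U (\<lambda>x. D2f x + mat (2 * \<eta>))"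
    using assms by (auto simp: C2_on_def intro!: continuous_intros)
  fix x assume "x \<in> U"
  then have df: "(f has_derivative (\<lambda>h. Df x \<bullet> h)) (at x)"
    and d2f: "(Df has_derivative (\<lambda>h. D2f x *v h)) (at x)"
    using assms by (auto simp: C2_on_def)
  have "((\<lambda>x. f x + \<eta> * ((x - x0) \<bullet> (x - x0)) + c * x $ k + m) has_derivative
      (\<lambda>h. Df x \<bullet> h + \<eta> * ((x - x0) \<bullet> (h - 0) + (h - 0) \<bullet> (x - x0)) + c * h $ k + 0)) (at x)"
    by (intro derivative_intros df bounded_linear_imp_has_derivative bounded_linear_vec_nth)
  then show "((\<lambda>x. f x + \<eta> * ((x - x0) \<bullet> (x - x0)) + c * x $ k + m) has_derivative
      (\<lambda>h. (Df x + (2 * \<eta>) *\<^sub>R (x - x0) + c *\<^sub>R axis k 1) \<bullet> h)) (at x)"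
    by (rule has_derivative_eq_rhs)
      (auto simp: fun_eq_iff inner_add_left inner_commute cart_eq_inner_axis algebra_simps)
  show "((\<lambda>x. Df x + (2 * \<eta>) *\<^sub>R (x - x0) + c *\<^sub>R axis k 1) has_derivative
      (\<lambda>h. (D2f x + mat (2 * \<eta>)) *v h)) (at x)"
    by (rule has_derivative_eq_rhs, (intro derivative_eq_intros d2f)+)
      (use d2f in \<open>auto simp: fun_eq_iff matrix_vector_mult_add_rdistrib matrix_vector_mult_mat\<close>)
qed

section \<open>Uniformly elliptic operators\<close>

lemma symm_mats_add: "A \<in> symm_mats \<Longrightarrow> B \<in> symm_mats \<Longrightarrow> A + B \<in> symm_mats"
  by (simp add: symm_mats_def transpose_def vec_eq_iff)

lemma symm_mats_diff: "A \<in> symm_mats \<Longrightarrow> B \<in> symm_mats \<Longrightarrow> A - B \<in> symm_mats"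
  by (simp add: symm_mats_def transpose_def vec_eq_iff)

lemma symm_mats_uminus: "A \<in> symm_mats \<Longrightarrow> - A \<in> symm_mats"
  by (simp add: symm_mats_def transpose_def vec_eq_iff)

lemma symm_mats_mat: "mat c \<in> symm_mats"
  by (simp add: symm_mats_def transpose_mat)

lemma mnorm_nonneg: "0 \<le> mnorm A"
  unfolding mnorm_def by (rule onorm_pos_le) simp

lemma mnorm_mat_le: "0 \<le> c \<Longrightarrow> mnorm (mat c :: 'n::finite mat) \<le> c"
  unfolding mnorm_def by (rule onorm_le) (simp add: matrix_vector_mult_mat)

lemma psd_mat: "0 \<le> c \<Longrightarrow> psd (mat c)"
  by (simp add: psd_def matrix_vector_mult_mat)

lemma psd_add_mat:
  fixes B :: "'n::finite mat"
  assumes "mnorm B \<le> c"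
  shows "psd (B + mat c)"
  unfolding psd_def
proof
  fix x :: "real^'n"
  have "\<bar>x \<bullet> (B *v x)\<bar> \<le> norm x * norm (B *v x)" by (rule Cauchy_Schwarz_ineq2)
  also have "\<dots> \<le> norm x * (mnorm B * norm x)"
    unfolding mnorm_def by (intro mult_left_mono onorm) auto
  also have "\<dots> \<le> c * (x \<bullet> x)"
    using assms by (simp add: mult_right_mono mult.commute mult.left_commute flip: power2_norm_eq_inner power2_eq_square)
  finally show "0 \<le> x \<bullet> ((B + mat c) *v x)"
    by (simp add: matrix_vector_mult_add_rdistrib matrix_vector_mult_mat inner_add_right)
qed

lemma mnorm_le_norm: "mnorm A \<le> real CARD('n) * real CARD('n) * norm (A :: 'n::finite mat)"
  unfolding mnorm_def
proof (rule onorm_le_matrix_component)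
  fix i j
  have "\<bar>A $ i $ j\<bar> \<le> norm (A $ i)" by (rule component_le_norm_cart)
  also have "\<dots> \<le> norm A" by (rule Finite_Cartesian_Product.norm_nth_le)
  finally show "\<bar>A $ i $ j\<bar> \<le> norm A" .
qed

lemma ellipticClass_mono:
  assumes "F \<in> ellipticClass lam Lam" "0 \<le> lam" "M \<in> symm_mats" "N \<in> symm_mats" "psd N"
  shows "F M \<le> F (M + N)"
  using assms mult_nonneg_nonneg[OF \<open>0 \<le> lam\<close> mnorm_nonneg[of N]]
  unfolding ellipticClass_def by fastforce

lemma ellipticClass_add_mat_le:
  fixes F :: "'n::finite mat \<Rightarrow> real"
  assumes "F \<in> ellipticClass lam Lam" "0 \<le> Lam" "M \<in> symm_mats" "0 \<le> c"
  shows "F (M + mat c) \<le> F M + Lam * c"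
proof -
  have "F (M + mat c) - F M \<le> Lam * mnorm (mat c :: 'n mat)"
    using assms symm_mats_mat psd_mat unfolding ellipticClass_def by blast
  also have "\<dots> \<le> Lam * c"
    using assms mnorm_mat_le by (intro mult_left_mono)
  finally show ?thesis by simp
qed

text \<open>The slack 2 eta absorbs the Hessian of the perturbation eta |x - x0|^2 used below.\<close>
lemma ellipticClass_strict_near:
  fixes F :: "'n::finite mat \<Rightarrow> real"
  assumes F: "F \<in> ellipticClass lam Lam" and lam: "0 \<le> lam" "0 < Lam"
    and C2: "C2_on U phi Dphi D2phi" and x0: "x0 \<in> U" and neg: "F (D2phi x0) < 0"
  obtains \<eta> d where "0 < \<eta>" "0 < d"
    "\<And>y. y \<in> U \<Longrightarrow> dist y x0 < d \<Longrightarrow> F (D2phi y + mat (2 * \<eta>)) < 0"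
proof -
  define \<eta> where "\<eta> = - F (D2phi x0) / (6 * Lam)"
  have \<eta>: "0 < \<eta>" using neg lam by (simp add: \<eta>_def divide_neg_pos)
  define K where "K = real CARD('n) * real CARD('n)"
  have K: "0 < K" by (simp add: K_def)
  obtain d where d: "0 < d" "\<And>y. y \<in> U \<Longrightarrow> dist y x0 < d \<Longrightarrow> dist (D2phi y) (D2phi x0) < \<eta> / K"
    using C2 x0 \<eta> K unfolding C2_on_def continuous_on_iff by (metis divide_pos_pos)
  have "F (D2phi y + mat (2 * \<eta>)) < 0" if y: "y \<in> U" "dist y x0 < d" for y
  proof -
    have sym: "D2phi x0 \<in> symm_mats" "D2phi y \<in> symm_mats"
      using C2_on_hessian_symmetric[OF C2] x0 y by auto
    have "mnorm (D2phi x0 - D2phi y) \<le> K * norm (D2phi x0 - D2phi y)"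
      unfolding K_def by (rule mnorm_le_norm)
    also have "\<dots> \<le> \<eta>"
      using d(2)[OF y] K by (simp add: dist_norm norm_minus_commute field_simps)
    finally have "psd ((D2phi x0 - D2phi y) + mat \<eta>)" by (rule psd_add_mat)
    then have "F (D2phi y + mat (2 * \<eta>)) \<le> F (D2phi y + mat (2 * \<eta>) + ((D2phi x0 - D2phi y) + mat \<eta>))"
      using F lam sym by (intro ellipticClass_mono symm_mats_add symm_mats_diff symm_mats_mat)
    also have "\<dots> = F (D2phi x0 + mat (3 * \<eta>))"
      by (rule arg_cong[of _ _ F]) (simp add: vec_eq_iff mat_def)
    also have "\<dots> \<le> F (D2phi x0) + Lam * (3 * \<eta>)"
      using F lam sym \<eta> by (intro ellipticClass_add_mat_le) auto
    also have "\<dots> < 0" using neg lam by (simp add: \<eta>_def)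
    finally show ?thesis .
  qed
  then show ?thesis using that \<eta> d(1) by blast
qed

section \<open>Kinked test functions at the interface\<close>

lemma continuous_attains_sup_in_ball:
  fixes g :: "'a::heine_borel \<Rightarrow> real"
  assumes "continuous_on (cball c r) g" "0 \<le> r" "\<And>y. dist c y = r \<Longrightarrow> g y < g c"
  obtains z where "z \<in> ball c r" "\<And>y. y \<in> cball c r \<Longrightarrow> g y \<le> g z"
proof -
  obtain z where z: "z \<in> cball c r" "\<And>y. y \<in> cball c r \<Longrightarrow> g y \<le> g z"
    using continuous_attains_sup[OF compact_cball _ assms(1)] assms(2) by auto
  moreover have "g c \<le> g z" using z(2) assms(2) by simp
  then have "dist c z \<noteq> r" using assms(3)[of z] by auto
  then have "z \<in> ball c r" using z(1) by simp
  ultimately show ?thesis using that by blast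
qed

lemma touches_above_mono:
  assumes "touches_above Om \<psi> v z" "\<And>x. \<psi> x \<le> \<theta> x" "\<theta> z = \<psi> z"
  shows "touches_above Om \<theta> v z"
  using assms unfolding touches_above_def by (metis order_trans)

lemma touches_above_cball:
  assumes "touches_above Om phi v x0" "open S" "x0 \<in> S"
  obtains r where "0 < r" "cball x0 r \<subseteq> S" "\<And>x. x \<in> cball x0 r \<inter> Om \<Longrightarrow> v x \<le> phi x"
proof -
  obtain r0 where "0 < r0" and below: "\<And>x. x \<in> ball x0 r0 \<inter> Om \<Longrightarrow> v x \<le> phi x"
    using assms(1) unfolding touches_above_def by blast
  obtain e where "0 < e" "ball x0 e \<subseteq> S \<inter> ball x0 r0"
    using assms(2,3) \<open>0 < r0\<close> by (meson Int_iff centre_in_ball open_Int open_ball openE)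
  then have "cball x0 (e / 2) \<subseteq> S \<inter> ball x0 r0"
    by (auto simp: subset_eq)
  with \<open>0 < e\<close> below show ?thesis by (intro that[of "e / 2"]) auto
qed

text \<open>Subtracting t |x_k| with t = eta r / 2 keeps v - phi - eta |x - x0|^2 + t |x_k| negative on
  the sphere |x - x0| = r, so its maximum over the closed ball is attained inside.\<close>
lemma kinked_touching_point:
  fixes v phi :: "real^'n::finite \<Rightarrow> real"
  assumes cont: "continuous_on (cball x0 r) v" "continuous_on (cball x0 r) phi"
    and below: "\<And>x. x \<in> cball x0 r \<Longrightarrow> v x \<le> phi x" and eq: "phi x0 = v x0"
    and x0: "x0 $ k = 0" and \<eta>: "0 < \<eta>" and r: "0 < r"
  obtains z m where "z \<in> ball x0 r"
    "touches_above Om (\<lambda>x. phi x + \<eta> * ((x - x0) \<bullet> (x - x0)) - \<eta> * r / 2 * \<bar>x $ k\<bar> + m) v z"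
proof -
  define \<psi> where "\<psi> x = phi x + \<eta> * ((x - x0) \<bullet> (x - x0)) - \<eta> * r / 2 * \<bar>x $ k\<bar>" for x
  have "continuous_on (cball x0 r) (\<lambda>x. v x - \<psi> x)"
    unfolding \<psi>_def using cont by (intro continuous_intros)
  moreover have "v y - \<psi> y < v x0 - \<psi> x0" if y: "dist x0 y = r" for y
  proof -
    have "\<bar>y $ k\<bar> \<le> r"
      using component_le_norm_cart[of "y - x0" k] x0 y by (simp add: dist_norm norm_minus_commute)
    then have kink: "\<eta> * r / 2 * \<bar>y $ k\<bar> \<le> \<eta> * r / 2 * r"
      using \<eta> r by (intro mult_left_mono) auto
    have sq: "(y - x0) \<bullet> (y - x0) = r\<^sup>2"
      using y by (simp add: dist_norm norm_minus_commute flip: power2_norm_eq_inner)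
    have "v y \<le> phi y" using below y by simp
    then have "v y - \<psi> y \<le> \<eta> * r / 2 * r - \<eta> * r\<^sup>2"
      using kink unfolding \<psi>_def sq by linarith
    also have "\<dots> < 0" using \<eta> r by (simp add: power2_eq_square)
    finally show ?thesis using eq x0 by (simp add: \<psi>_def)
  qed
  ultimately obtain z where z: "z \<in> ball x0 r"
    and max: "\<And>y. y \<in> cball x0 r \<Longrightarrow> v y - \<psi> y \<le> v z - \<psi> z"
    using r by (elim continuous_attains_sup_in_ball) auto
  obtain \<rho> where \<rho>: "0 < \<rho>" "ball z \<rho> \<subseteq> ball x0 r"
    using z openE open_ball by blast
  have "v x \<le> \<psi> x + (v z - \<psi> z)" if "x \<in> ball z \<rho>" for x
  proof -
    have "x \<in> cball x0 r" using that \<rho>(2) ball_subset_cball by blast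
    then show ?thesis using max[of x] by simp
  qed
  then have "touches_above Om (\<lambda>x. \<psi> x + (v z - \<psi> z)) v z"
    unfolding touches_above_def using \<rho>(1) by auto
  then show ?thesis using that z unfolding \<psi>_def by blast
qed

lemma pw_C2_test_kink:
  fixes k :: "'n::finite"
  assumes C2: "C2_on U phi Dphi D2phi" and z: "z \<in> U"
  obtains dp dm where "dp - dm = - 2 * t"
    "pw_C2_test k z (\<lambda>x. phi x + \<eta> * ((x - x0) \<bullet> (x - x0)) - t * \<bar>x $ k\<bar> + m) dp dm"
proof -
  obtain \<rho> where \<rho>: "0 < \<rho>" "ball z \<rho> \<subseteq> U"
    using C2 z openE unfolding C2_on_def by blast
  define D where "D c x = Dphi x + (2 * \<eta>) *\<^sub>R (x - x0) + c *\<^sub>R axis k 1" for c x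
  have C2': "C2_on (ball z \<rho>) (\<lambda>x. phi x + \<eta> * ((x - x0) \<bullet> (x - x0)) + c * x $ k + m)
      (D c) (\<lambda>x. D2phi x + mat (2 * \<eta>))" for c
    unfolding D_def using C2_on_subset[OF C2_on_add_quadratic[OF C2] open_ball \<rho>(2)] .
  have "continuous_on (ball z \<rho>) (\<lambda>x. phi x + \<eta> * ((x - x0) \<bullet> (x - x0)) - t * \<bar>x $ k\<bar> + m)"
    using C2_on_continuous[OF C2_on_subset[OF C2 open_ball \<rho>(2)]] by (intro continuous_intros)
  then have "pw_C2_test k z (\<lambda>x. phi x + \<eta> * ((x - x0) \<bullet> (x - x0)) - t * \<bar>x $ k\<bar> + m)
      (D (- t) z $ k) (D t z $ k)"
    unfolding pw_C2_test_def using \<rho>(1) C2'[of "- t"] C2'[of t] by (intro exI conjI) auto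
  moreover have "D (- t) z $ k - D t z $ k = - 2 * t" by (simp add: D_def)
  ultimately show ?thesis using that by blast
qed

lemma visc_sub_atD:
  "visc_sub_at F Om v x0 \<Longrightarrow> x0 \<in> U \<Longrightarrow> C2_on U phi Dphi D2phi \<Longrightarrow> touches_above Om phi v x0
    \<Longrightarrow> 0 \<le> F (D2phi x0)"
  unfolding visc_sub_at_def by blast

lemma flat_visc_solution_interface_subD:
  "flat_visc_solution F k v \<Longrightarrow> x0 \<in> flat_T k \<Longrightarrow> pw_C2_test k x0 phi dp dm
    \<Longrightarrow> touches_above (ball 0 1) phi v x0 \<Longrightarrow> 0 \<le> dp - dm"
  unfolding flat_visc_solution_def by blast

text \<open>Away from the interface the kink is dominated by a smooth test function with the same
  Hessian, which touches v at z as well.\<close>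
lemma kinked_touching_off_interface:
  fixes k :: "'n::finite"
  assumes sub: "visc_sub_at F Om v z" and zk: "z $ k \<noteq> 0" and t: "0 \<le> t"
    and C2: "C2_on U phi Dphi D2phi" and zU: "z \<in> U"
    and touch: "touches_above Om (\<lambda>x. phi x + \<eta> * ((x - x0) \<bullet> (x - x0)) - t * \<bar>x $ k\<bar> + m) v z"
  shows "0 \<le> F (D2phi z + mat (2 * \<eta>))"
proof -
  define c where "c = (if 0 < z $ k then - t else t)"
  have "- t * \<bar>x $ k\<bar> \<le> c * x $ k" for x
    using mult_left_mono[OF abs_ge_minus_self[of "x $ k"] t] mult_left_mono[OF abs_ge_self[of "x $ k"] t]
    by (auto simp: c_def)
  then have "touches_above Om (\<lambda>x. phi x + \<eta> * ((x - x0) \<bullet> (x - x0)) + c * x $ k + m) v z"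
    using zk by (intro touches_above_mono[OF touch]) (auto simp: c_def)
  then show ?thesis
    by (rule visc_sub_atD[OF sub zU C2_on_add_quadratic[OF C2]])
qed

lemma kinked_touching_on_interface:
  assumes sol: "flat_visc_solution F k v" and z: "z \<in> flat_T k" and t: "0 < t"
    and C2: "C2_on U phi Dphi D2phi" and zU: "z \<in> U"
    and touch: "touches_above (ball 0 1) (\<lambda>x. phi x + \<eta> * ((x - x0) \<bullet> (x - x0)) - t * \<bar>x $ k\<bar> + m) v z"
  shows False
proof -
  obtain dp dm where "dp - dm = - 2 * t"
    and pw: "pw_C2_test k z (\<lambda>x. phi x + \<eta> * ((x - x0) \<bullet> (x - x0)) - t * \<bar>x $ k\<bar> + m) dp dm"
    by (rule pw_C2_test_kink[OF C2 zU])
  with flat_visc_solution_interface_subD[OF sol z pw touch] t show False by simp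
qed

lemma flat_visc_solution_sub_at_interface:
  fixes F :: "'n::finite mat \<Rightarrow> real"
  assumes F: "F \<in> ellipticClass lam Lam" and lam: "0 \<le> lam" "0 < Lam"
    and sol: "flat_visc_solution F k v" and x0: "x0 \<in> flat_T k"
  shows "visc_sub_at F (ball 0 1) v x0"
  unfolding visc_sub_at_def
proof (intro allI impI, elim conjE)
  fix phi Dphi D2phi U
  assume x0U: "x0 \<in> U" and C2: "C2_on U phi Dphi D2phi" and touch: "touches_above (ball 0 1) phi v x0"
  show "0 \<le> F (D2phi x0)"
  proof (rule ccontr)
    assume "\<not> 0 \<le> F (D2phi x0)"
    then have "F (D2phi x0) < 0" by simp
    then obtain \<eta> d where \<eta>: "0 < \<eta>" and "0 < d"
      and strict: "\<And>y. y \<in> U \<Longrightarrow> dist y x0 < d \<Longrightarrow> F (D2phi y + mat (2 * \<eta>)) < 0"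
      using ellipticClass_strict_near[OF F lam C2 x0U] by metis
    have x0': "x0 \<in> ball 0 1" "x0 $ k = 0" using x0 by (auto simp: flat_T_def)
    have "open (U \<inter> ball 0 1 \<inter> ball x0 d)" "x0 \<in> U \<inter> ball 0 1 \<inter> ball x0 d"
      using C2 x0U x0' \<open>0 < d\<close> by (auto simp: C2_on_def)
    then obtain r where r: "0 < r" "cball x0 r \<subseteq> U \<inter> ball 0 1 \<inter> ball x0 d"
      and below: "\<And>x. x \<in> cball x0 r \<inter> ball 0 1 \<Longrightarrow> v x \<le> phi x"
      using touches_above_cball[OF touch] by metis
    have cv: "continuous_on (cball x0 r) v"
      using sol r(2) unfolding flat_visc_solution_def by (meson continuous_on_subset le_inf_iff)
    have cphi: "continuous_on (cball x0 r) phi"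
      using C2_on_continuous[OF C2] r(2) by (meson continuous_on_subset le_inf_iff)
    have le: "\<And>x. x \<in> cball x0 r \<Longrightarrow> v x \<le> phi x" using below r(2) by blast
    have eq: "phi x0 = v x0" using touch by (simp add: touches_above_def)
    obtain z m where z: "z \<in> ball x0 r" and touch_z:
      "touches_above (ball 0 1) (\<lambda>x. phi x + \<eta> * ((x - x0) \<bullet> (x - x0)) - \<eta> * r / 2 * \<bar>x $ k\<bar> + m) v z"
      by (rule kinked_touching_point[OF cv cphi le eq x0'(2) \<eta> r(1)])
    have zU: "z \<in> U" and zB: "z \<in> ball 0 1" and "z \<in> ball x0 d"
      using z r(2) ball_subset_cball by blast+
    have t: "0 < \<eta> * r / 2" using \<eta> r by simp
    show False
    proof (cases "z $ k = 0")
      case True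
      then have "z \<in> flat_T k" using zB by (simp add: flat_T_def)
      from kinked_touching_on_interface[OF sol this t C2 zU touch_z] show False .
    next
      case False
      then have "z \<in> half_ball_pos k \<union> half_ball_neg k"
        using zB by (auto simp: half_ball_pos_def half_ball_neg_def neq_iff)
      then have "visc_sub_at F (ball 0 1) v z"
        using sol unfolding flat_visc_solution_def by blast
      from kinked_touching_off_interface[OF this False less_imp_le[OF t] C2 zU touch_z]
        strict[OF zU] \<open>z \<in> ball x0 d\<close>
      show False by (simp add: dist_commute)
    qed
  qed
qed

section \<open>Duality and the full equation\<close>

definition dual_operator :: "('n::finite mat \<Rightarrow> real) \<Rightarrow> 'n mat \<Rightarrow> real" where
  "dual_operator F M = - F (- M)"

lemma dual_operator_dual_operator [simp]: "dual_operator (dual_operator F) = F"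
  by (simp add: dual_operator_def fun_eq_iff)

lemma dual_operator_ellipticClass:
  assumes "F \<in> ellipticClass lam Lam"
  shows "dual_operator F \<in> ellipticClass lam Lam"
  unfolding ellipticClass_def
proof (intro CollectI conjI ballI impI)
  show "dual_operator F 0 = 0" using assms by (simp add: ellipticClass_def dual_operator_def)
  fix M N :: "'a mat" assume MN: "M \<in> symm_mats" "N \<in> symm_mats" "psd N"
  then have "- M - N \<in> symm_mats" by (intro symm_mats_diff symm_mats_uminus)
  then have "lam * mnorm N \<le> F ((- M - N) + N) - F (- M - N) \<and> F ((- M - N) + N) - F (- M - N) \<le> Lam * mnorm N"
    using assms MN unfolding ellipticClass_def by blast
  then show "lam * mnorm N \<le> dual_operator F (M + N) - dual_operator F M"
    "dual_operator F (M + N) - dual_operator F M \<le> Lam * mnorm N"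
    by (simp_all add: dual_operator_def algebra_simps)
qed

lemma touches_above_uminus:
  "touches_above Om (\<lambda>x. - phi x) (\<lambda>x. - v x) x0 \<longleftrightarrow> touches_below Om phi v x0"
  unfolding touches_above_def touches_below_def by simp

lemma touches_below_uminus:
  "touches_below Om (\<lambda>x. - phi x) (\<lambda>x. - v x) x0 \<longleftrightarrow> touches_above Om phi v x0"
  unfolding touches_above_def touches_below_def by simp

lemma pw_C2_test_uminus:
  assumes "pw_C2_test k x0 phi dp dm"
  shows "pw_C2_test k x0 (\<lambda>x. - phi x) (- dp) (- dm)"
proof -
  obtain \<delta> phip Dp D2p phim Dm D2m where "0 < \<delta>" "continuous_on (ball x0 \<delta>) phi"
    "C2_on (ball x0 \<delta>) phip Dp D2p" "C2_on (ball x0 \<delta>) phim Dm D2m"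
    "\<forall>x\<in>cball x0 \<delta>. x $ k \<ge> 0 \<longrightarrow> phi x = phip x"
    "\<forall>x\<in>cball x0 \<delta>. x $ k \<le> 0 \<longrightarrow> phi x = phim x"
    "dp = Dp x0 $ k" "dm = Dm x0 $ k"
    using assms unfolding pw_C2_test_def by blast
  then have "0 < \<delta> \<and> continuous_on (ball x0 \<delta>) (\<lambda>x. - phi x) \<and>
      C2_on (ball x0 \<delta>) (\<lambda>x. - phip x) (\<lambda>x. - Dp x) (\<lambda>x. - D2p x) \<and>
      C2_on (ball x0 \<delta>) (\<lambda>x. - phim x) (\<lambda>x. - Dm x) (\<lambda>x. - D2m x) \<and>
      (\<forall>x\<in>cball x0 \<delta>. x $ k \<ge> 0 \<longrightarrow> - phi x = - phip x) \<and>
      (\<forall>x\<in>cball x0 \<delta>. x $ k \<le> 0 \<longrightarrow> - phi x = - phim x) \<and>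
      - dp = (- Dp x0) $ k \<and> - dm = (- Dm x0) $ k"
    by (auto intro: C2_on_uminus continuous_intros)
  then show ?thesis unfolding pw_C2_test_def by blast
qed

lemma visc_super_atD:
  "visc_super_at F Om v x0 \<Longrightarrow> x0 \<in> U \<Longrightarrow> C2_on U phi Dphi D2phi \<Longrightarrow> touches_below Om phi v x0
    \<Longrightarrow> F (D2phi x0) \<le> 0"
  unfolding visc_super_at_def by blast

lemma visc_sub_at_dual_operator_iff:
  "visc_sub_at (dual_operator F) Om (\<lambda>x. - v x) x0 \<longleftrightarrow> visc_super_at F Om v x0"
proof
  assume sub: "visc_sub_at (dual_operator F) Om (\<lambda>x. - v x) x0"
  show "visc_super_at F Om v x0"
    unfolding visc_super_at_def
  proof (intro allI impI, elim conjE)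
    fix phi Dphi D2phi U
    assume "x0 \<in> U" "C2_on U phi Dphi D2phi" "touches_below Om phi v x0"
    then have "0 \<le> dual_operator F (- D2phi x0)"
      by (intro visc_sub_atD[OF sub _ C2_on_uminus]) (simp_all add: touches_above_uminus)
    then show "F (D2phi x0) \<le> 0" by (simp add: dual_operator_def)
  qed
next
  assume super: "visc_super_at F Om v x0"
  show "visc_sub_at (dual_operator F) Om (\<lambda>x. - v x) x0"
    unfolding visc_sub_at_def
  proof (intro allI impI, elim conjE)
    fix phi Dphi D2phi U
    assume "x0 \<in> U" "C2_on U phi Dphi D2phi" "touches_above Om phi (\<lambda>x. - v x) x0"
    then have "F (- D2phi x0) \<le> 0"
      by (intro visc_super_atD[OF super _ C2_on_uminus])
        (use touches_above_uminus[of Om "\<lambda>x. - phi x" v x0] in simp_all)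
    then show "0 \<le> dual_operator F (D2phi x0)" by (simp add: dual_operator_def)
  qed
qed

lemma visc_super_at_dual_operator_iff:
  "visc_super_at (dual_operator F) Om (\<lambda>x. - v x) x0 \<longleftrightarrow> visc_sub_at F Om v x0"
  using visc_sub_at_dual_operator_iff[of "dual_operator F" Om "\<lambda>x. - v x" x0] by simp

lemma flat_visc_solution_dual_operator:
  assumes sol: "flat_visc_solution F k v"
  shows "flat_visc_solution (dual_operator F) k (\<lambda>x. - v x)"
  unfolding flat_visc_solution_def
proof (intro conjI ballI allI impI)
  show "continuous_on (ball 0 1) (\<lambda>x. - v x)"
    using sol by (auto simp: flat_visc_solution_def intro!: continuous_intros)
  fix x0 assume "x0 \<in> half_ball_pos k \<union> half_ball_neg k"
  then show "visc_sub_at (dual_operator F) (ball 0 1) (\<lambda>x. - v x) x0"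
    "visc_super_at (dual_operator F) (ball 0 1) (\<lambda>x. - v x) x0"
    using sol unfolding flat_visc_solution_def visc_sub_at_dual_operator_iff
      visc_super_at_dual_operator_iff by blast+
next
  fix x0 phi dp dm
  assume x0: "x0 \<in> flat_T k" and pw: "pw_C2_test k x0 phi dp dm"
  have "(touches_above (ball 0 1) (\<lambda>x. - phi x) v x0 \<longrightarrow> - dp - - dm \<ge> 0) \<and>
        (touches_below (ball 0 1) (\<lambda>x. - phi x) v x0 \<longrightarrow> - dp - - dm \<le> 0)"
    using sol x0 pw_C2_test_uminus[OF pw] unfolding flat_visc_solution_def by blast
  then show "touches_above (ball 0 1) phi (\<lambda>x. - v x) x0 \<Longrightarrow> 0 \<le> dp - dm"
    "touches_below (ball 0 1) phi (\<lambda>x. - v x) x0 \<Longrightarrow> dp - dm \<le> 0"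
    using touches_above_uminus[of _ "\<lambda>x. - phi x"] touches_below_uminus[of _ "\<lambda>x. - phi x"]
    by auto
qed

lemma flat_visc_solution_imp_visc_solution:
  fixes F :: "'n::finite mat \<Rightarrow> real"
  assumes F: "F \<in> ellipticClass lam Lam" and lam: "0 \<le> lam" "0 < Lam"
    and sol: "flat_visc_solution F k v"
  shows "visc_solution F (ball 0 1) v"
proof -
  have "visc_sub_at F (ball 0 1) v x0 \<and> visc_super_at F (ball 0 1) v x0"
    if "x0 \<in> ball 0 1" for x0 :: "real^'n"
  proof (cases "x0 $ k = 0")
    case True
    then have "x0 \<in> flat_T k" using that by (simp add: flat_T_def)
    then show ?thesis
      using flat_visc_solution_sub_at_interface[OF F lam sol]
        flat_visc_solution_sub_at_interface[OF dual_operator_ellipticClass[OF F] lam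
          flat_visc_solution_dual_operator[OF sol]]
      by (simp add: visc_sub_at_dual_operator_iff)
  next
    case False
    then have "x0 \<in> half_ball_pos k \<union> half_ball_neg k"
      using that by (auto simp: half_ball_pos_def half_ball_neg_def neq_iff)
    then show ?thesis using sol by (simp add: flat_visc_solution_def)
  qed
  then show ?thesis using sol unfolding visc_solution_def flat_visc_solution_def by blast
qed

theorem mainTheorem17:
  fixes lam Lam a :: real
  assumes "0 < lam" and "lam \<le> Lam"
    and "univ_C2a_exponent TYPE('n::finite) lam Lam a"
  shows "\<exists>C>0. \<forall>(F::'n mat \<Rightarrow> real) (v::real^'n \<Rightarrow> real) (k::'n).
           F \<in> ellipticClass lam Lam \<and> concave_on symm_mats F \<and>
           flat_visc_solution F k v \<and> bounded (v ` ball 0 1) \<longrightarrow>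
           (\<exists>Dv D2v. in_C2a (ball 0 (1/2)) a v Dv D2v \<and>
              C2a_norm (ball 0 (1/2)) a v Dv D2v \<le> C * sup_norm (ball 0 1) v)"
proof -
  obtain C where "C > 0" and regularity: "\<forall>(F::'n mat \<Rightarrow> real) w.
      F \<in> ellipticClass lam Lam \<and> concave_on symm_mats F \<and>
      visc_solution F (ball 0 1) w \<and> bounded (w ` ball 0 1) \<longrightarrow>
      (\<exists>Dw D2w. in_C2a (ball 0 (1/2)) a w Dw D2w \<and>
         C2a_norm (ball 0 (1/2)) a w Dw D2w \<le> C * sup_norm (ball 0 1) w)"
    using assms(3) unfolding univ_C2a_exponent_def by blast
  have "0 \<le> lam" "0 < Lam" using assms(1,2) by simp_all
  then have "visc_solution F (ball 0 1) v"
    if "F \<in> ellipticClass lam Lam" "flat_visc_solution F k v" for F :: "'n mat \<Rightarrow> real" and v k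
    using that by (intro flat_visc_solution_imp_visc_solution)
  with \<open>C > 0\<close> regularity show ?thesis by blast
qed

end
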